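(* Fix $\omega\in(0,1)$. For a Banach space $(X,\|\cdot\|_X)$ define $f_\omega:X\to X$ by $f_\omega(x)=\|x\|_X^{\omega-1}x$ for $x\neq0$ and $f_\omega(0)=0$. Then for every $p\in(0,\infty)$ and all $x,y\in X$, $$\frac{\eta(p,\omega)\|x-y\|_X}{(\|x\|_X^{p\omega}+\|y\|_X^{p\omega})^{\frac{1-\omega}{p\omega}}}\le\|f_\omega(x)-f_\omega(y)\|_X\le2^{1-\omega}\|x-y\|_X^\omega,$$ where $\eta(p,\omega)=\inf_{\sigma\in[0,1)}\frac{1-\sigma^\omega}{1-\sigma}(1+\sigma^{p\omega})^{\frac{1-\omega}{p\omega}}$. Moreover (for $X\neq\{0\}$) neither of the constants $\eta(p,\omega)$ and $2^{1-\omega}$ in these two inequalities can be improved. *)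

theory Defs
  imports "HOL-Analysis.Analysis"
begin

definition f_omega :: "real \<Rightarrow> 'a::real_normed_vector \<Rightarrow> 'a" where
  "f_omega \<omega> x = (if x = 0 then 0 else (norm x powr (\<omega> - 1)) *\<^sub>R x)"

definition eta :: "real \<Rightarrow> real \<Rightarrow> real" where
  "eta p \<omega> = Inf ((\<lambda>\<sigma>. (1 - \<sigma> powr \<omega>) / (1 - \<sigma>)
        * (1 + \<sigma> powr (p * \<omega>)) powr ((1 - \<omega>) / (p * \<omega>))) ` {0..<1})"

end

theory Submission
  imports Defs
begin

text \<open>Let \<open>\<parallel>y\<parallel> \<le> \<parallel>x\<parallel>\<close>, \<open>a = \<parallel>x\<parallel>\<close>, \<open>b = \<parallel>y\<parallel>\<close>, \<open>t = \<parallel>x - y\<parallel>\<close>. Writing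
  \<open>f x - f y = a^(\<omega>-1) (x - y) + (a^(\<omega>-1) - b^(\<omega>-1)) y\<close> reduces the upper bound to
  a real inequality in \<open>a, b, t\<close>, which is proved separately for \<open>t < b\<close>, \<open>b \<le> t \<le> 2b\<close>
  and \<open>2b < t\<close>. The same splitting for the inverse map \<open>u \<mapsto> \<parallel>u\<parallel>^(1/\<omega>-1) u\<close> gives
  \<open>t (a^\<omega> - b^\<omega>) \<le> \<parallel>f x - f y\<parallel> (a - b)\<close>, and for \<open>\<sigma> = b/a\<close> the resulting lower
  bound is exactly the function of \<open>\<sigma>\<close> whose infimum is \<open>\<eta>(p, \<omega>)\<close>. For a unit
  vector \<open>e\<close>, the pairs \<open>(e, \<sigma> e)\<close> attain that function and \<open>(e, -e)\<close> attains
  \<open>2^(1-\<omega>)\<close>, so neither constant can be improved.\<close>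

lemma powr_ge_one_plus_mult_nonpos:
  fixes x r :: real
  assumes "0 < x" "r \<le> 0"
  shows "1 + r * (x - 1) \<le> x powr r"
proof -
  have "r * (x - 1) \<le> r * ln x"
    using ln_le_minus_one[OF assms(1)] assms(2) by (simp add: mult_left_mono_neg)
  also have "1 + r * ln x \<le> exp (r * ln x)" by simp
  finally show ?thesis using assms by (simp add: powr_def)
qed

lemma powr_add_le_two_powr:
  fixes a b w :: real
  assumes "0 < a" "0 < b" "0 \<le> w" "w \<le> 1"
  shows "a powr w + b powr w \<le> 2 powr (1 - w) * (a + b) powr w"
proof -
  define m where "m = (a + b) / 2"
  have m: "0 < m" using assms by (simp add: m_def)
  have young: "s powr w \<le> w * s + (1 - w)" if "0 < s" for s
    using Youngs_inequality_0[of w "1 - w" s 1] that assms by simp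
  have "(a/m) powr w + (b/m) powr w \<le> w * (a/m + b/m) + 2 * (1 - w)"
    using young[of "a/m"] young[of "b/m"] assms m by (simp add: distrib_left)
  also have "a/m + b/m = 2"
    unfolding add_divide_distrib[symmetric] m_def using assms by (simp add: field_simps)
  finally have "(a/m) powr w + (b/m) powr w \<le> 2" by simp
  hence "a powr w + b powr w \<le> 2 * m powr w"
    using m by (simp add: powr_divide divide_le_eq flip: add_divide_distrib)
  also have "2 * m powr w = 2 powr (1 - w) * (a + b) powr w"
    using assms by (simp add: m_def powr_divide powr_diff)
  finally show ?thesis .
qed

lemma holder_estimate_close_unit:
  fixes t w :: real
  assumes "0 < t" "t \<le> 1" "0 < w" "w < 1"
  shows "(1 + t) powr (w - 1) * (t - 1) + 1 \<le> 2 powr (1 - w) * t powr w"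
proof -
  have left: "(1 + t) powr (w - 1) * (t - 1) \<le> (1 + (w - 1) * t) * (t - 1)"
    using powr_ge_one_plus_mult_nonpos[of "1 + t" "w - 1"] assms
    by (intro mult_right_mono_neg) auto
  have "1 + (1 - w) * (1 - t) \<le> t powr (w - 1)"
    using powr_ge_one_plus_mult_nonpos[of t "w - 1"] assms by (simp add: algebra_simps)
  also have "\<dots> \<le> 2 powr (1 - w) * t powr (w - 1)"
    using assms mult_right_mono[of 1 "2 powr (1 - w)" "t powr (w - 1)"]
    by (simp add: ge_one_powr_ge_zero)
  finally have "t * (1 + (1 - w) * (1 - t)) \<le> t * (2 powr (1 - w) * t powr (w - 1))"
    using assms by (intro mult_left_mono) auto
  also have "\<dots> = 2 powr (1 - w) * t powr w"
    using assms by (simp add: powr_add[symmetric] powr_mult_base)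
  finally have right: "t * (1 + (1 - w) * (1 - t)) \<le> 2 powr (1 - w) * t powr w" .
  have "(1 + (w - 1) * t) * (t - 1) + 1 = t * (1 + (1 - w) * (1 - t))"
    by (simp add: algebra_simps)
  with left right show ?thesis by linarith
qed

lemma holder_estimate_close:
  fixes b t w :: real
  assumes "0 < t" "t \<le> b" "0 < w" "w < 1"
  shows "(t + b) powr (w - 1) * (t - b) + b powr w \<le> 2 powr (1 - w) * t powr w"
proof -
  have b: "0 < b" using assms by simp
  define \<tau> where "\<tau> = t / b"
  have "b powr w * ((1 + \<tau>) powr (w - 1) * (\<tau> - 1) + 1) \<le> b powr w * (2 powr (1 - w) * \<tau> powr w)"
    using holder_estimate_close_unit[of \<tau> w] assms b by (intro mult_left_mono) (auto simp: \<tau>_def)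
  moreover have "b powr w * (2 powr (1 - w) * \<tau> powr w) = 2 powr (1 - w) * t powr w"
    using b by (simp add: \<tau>_def powr_divide)
  moreover have "b powr w * ((1 + \<tau>) powr (w - 1) * (\<tau> - 1) + 1)
      = (t + b) powr (w - 1) * (t - b) + b powr w"
  proof -
    have "1 + \<tau> = (t + b) / b" using b by (simp add: \<tau>_def field_simps)
    hence "(1 + \<tau>) powr (w - 1) = (t + b) powr (w - 1) / b powr (w - 1)"
      by (simp add: powr_divide)
    moreover have "\<tau> - 1 = (t - b) / b" using b by (simp add: \<tau>_def field_simps)
    moreover have "b powr w = b powr (w - 1) * b" using b by (simp add: powr_mult_base mult.commute)
    ultimately show ?thesis using b by (simp add: field_simps)
  qed
  ultimately show ?thesis by simp
qed

lemma holder_estimate_scalar: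
  fixes a b t w :: real
  assumes w: "0 < w" "w < 1" and "0 < b" "b \<le> a" "0 < t" and "a \<le> t + b" "t \<le> a + b"
  shows "a powr (w - 1) * (t - b) + b powr w \<le> 2 powr (1 - w) * t powr w"
proof -
  have mono: "a powr (w - 1) \<le> s powr (w - 1)" if "0 < s" "s \<le> a" for s
    using powr_mono2'[of "w - 1" s a] w that by simp
  have bw: "b powr (w - 1) * b = b powr w"
    using \<open>0 < b\<close> by (simp add: powr_mult_base mult.commute)
  consider "t < b" | "b \<le> t" "t \<le> 2 * b" | "2 * b < t" by linarith
  then show ?thesis
  proof cases
    case 1
    have "(t + b) powr (w - 1) \<le> a powr (w - 1)"
      using powr_mono2'[of "w - 1" a "t + b"] assms by simp
    hence "a powr (w - 1) * (t - b) \<le> (t + b) powr (w - 1) * (t - b)"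
      using 1 by (intro mult_right_mono_neg) auto
    moreover have "(t + b) powr (w - 1) * (t - b) + b powr w \<le> 2 powr (1 - w) * t powr w"
      using holder_estimate_close[of t b w] 1 assms by simp
    ultimately show ?thesis by linarith
  next
    case 2
    have "a powr (w - 1) * (t - b) \<le> b powr (w - 1) * (t - b)"
      using mono[of b] 2 assms by (intro mult_right_mono) auto
    hence "a powr (w - 1) * (t - b) + b powr w \<le> b powr (w - 1) * t" using bw by (simp add: algebra_simps)
    also have "b powr (w - 1) * t = t powr w * (t / b) powr (1 - w)"
      using assms by (simp add: powr_divide powr_diff powr_minus divide_simps powr_mult_base)
    also have "\<dots> \<le> t powr w * 2 powr (1 - w)"
      using 2 assms by (intro mult_left_mono powr_mono2) (auto simp: field_simps)
    finally show ?thesis by (simp add: mult.commute)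
  next
    case 3
    have "a powr (w - 1) * (t - b) \<le> (t - b) powr (w - 1) * (t - b)"
      using mono[of "t - b"] 3 assms by (intro mult_right_mono) auto
    also have "\<dots> = (t - b) powr w"
      using 3 assms by (simp add: powr_mult_base mult.commute)
    finally have "a powr (w - 1) * (t - b) + b powr w \<le> (t - b) powr w + b powr w" by simp
    also have "\<dots> \<le> 2 powr (1 - w) * ((t - b) + b) powr w"
      using 3 assms by (intro powr_add_le_two_powr) auto
    finally show ?thesis by simp
  qed
qed

lemma f_omega_nonzero: "x \<noteq> 0 \<Longrightarrow> f_omega w x = norm x powr (w - 1) *\<^sub>R x"
  by (simp add: f_omega_def)

lemma norm_f_omega: "norm (f_omega w x) = norm x powr w"
proof (cases "x = 0")
  case False
  then show ?thesis by (simp add: f_omega_def powr_mult_base mult.commute)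
qed (simp add: f_omega_def)

lemma norm_powr_scaleR_f_omega: "norm x powr (1 - w) *\<^sub>R f_omega w x = x"
  by (cases "x = 0") (simp_all add: f_omega_def flip: powr_add)

lemma f_omega_scaleR_unit:
  assumes "norm e = 1" "0 \<le> s"
  shows "f_omega w (s *\<^sub>R e) = s powr w *\<^sub>R e"
proof (cases "s = 0")
  case False
  then show ?thesis using assms by (simp add: f_omega_def powr_mult_base mult.commute)
qed (simp add: f_omega_def)

lemma f_omega_holder_ordered:
  fixes x y :: "'a::real_normed_vector"
  assumes w: "0 < w" "w < 1" and "norm y \<le> norm x" "y \<noteq> 0" "x \<noteq> y"
  shows "norm (f_omega w x - f_omega w y) \<le> 2 powr (1 - w) * norm (x - y) powr w"
proof -
  define a b t where "a = norm x" "b = norm y" "t = norm (x - y)"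
  have b: "0 < b" "b \<le> a" and "0 < t" using assms by (simp_all add: a_b_t_def)
  have "x \<noteq> 0" using assms by auto
  have mono: "a powr (w - 1) \<le> b powr (w - 1)" using powr_mono2'[of "w - 1" b a] w b by simp
  have split: "f_omega w x - f_omega w y
      = a powr (w - 1) *\<^sub>R (x - y) + (a powr (w - 1) - b powr (w - 1)) *\<^sub>R y"
    using \<open>x \<noteq> 0\<close> \<open>y \<noteq> 0\<close> by (simp add: f_omega_nonzero a_b_t_def algebra_simps)
  have "norm (f_omega w x - f_omega w y) \<le> a powr (w - 1) * t + \<bar>a powr (w - 1) - b powr (w - 1)\<bar> * b"
    unfolding split a_b_t_def by (rule order_trans[OF norm_triangle_ineq]) simp
  also have "\<dots> = a powr (w - 1) * (t - b) + b powr w"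
    using mono b by (simp add: algebra_simps powr_mult_base)
  also have "\<dots> \<le> 2 powr (1 - w) * t powr w"
  proof (rule holder_estimate_scalar[OF w b \<open>0 < t\<close>])
    show "a \<le> t + b" "t \<le> a + b"
      unfolding a_b_t_def using norm_triangle_sub[of x y] norm_triangle_ineq4[of x y] by simp_all
  qed
  finally show ?thesis by (simp add: a_b_t_def)
qed

lemma f_omega_holder:
  fixes x y :: "'a::real_normed_vector"
  assumes "0 < w" "w < 1"
  shows "norm (f_omega w x - f_omega w y) \<le> 2 powr (1 - w) * norm (x - y) powr w"
proof -
  have one: "1 \<le> 2 powr (1 - w)" using assms by (intro ge_one_powr_ge_zero) auto
  have at_zero: "norm (f_omega w z) \<le> 2 powr (1 - w) * norm z powr w" for z :: 'a
    using mult_right_mono[OF one, of "norm z powr w"] by (simp add: norm_f_omega)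
  have ordered: "norm (f_omega w x - f_omega w y) \<le> 2 powr (1 - w) * norm (x - y) powr w"
    if "norm y \<le> norm x" for x y :: 'a
    using f_omega_holder_ordered[OF assms that] at_zero[of x] by (cases "y = 0 \<or> x = y") (auto simp: f_omega_def)
  show ?thesis
    using ordered[of y x] ordered[of x y] by (cases "norm y \<le> norm x") (simp_all add: norm_minus_commute)
qed

definition eta_ratio :: "real \<Rightarrow> real \<Rightarrow> real \<Rightarrow> real" where
  "eta_ratio p w \<sigma> = (1 - \<sigma> powr w) / (1 - \<sigma>) * (1 + \<sigma> powr (p * w)) powr ((1 - w) / (p * w))"

lemma eta_eq_Inf_eta_ratio: "eta p w = Inf (eta_ratio p w ` {0..<1})"
  unfolding eta_def eta_ratio_def ..

lemma eta_ratio_nonneg: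
  assumes "0 \<le> w" "\<sigma> \<in> {0..<1}"
  shows "0 \<le> eta_ratio p w \<sigma>"
proof -
  have "\<sigma> powr w \<le> 1" using assms by (intro powr_le1) auto
  thus ?thesis using assms unfolding eta_ratio_def by (intro mult_nonneg_nonneg divide_nonneg_nonneg) auto
qed

lemma eta_le_eta_ratio:
  assumes "0 \<le> w" "\<sigma> \<in> {0..<1}"
  shows "eta p w \<le> eta_ratio p w \<sigma>"
  unfolding eta_eq_Inf_eta_ratio
proof (rule cInf_lower)
  show "eta_ratio p w \<sigma> \<in> eta_ratio p w ` {0..<1}" using assms by simp
  show "bdd_below (eta_ratio p w ` {0..<1})"
    using eta_ratio_nonneg[OF assms(1)] by (intro bdd_belowI[of _ 0]) auto
qed

lemma eta_le_one: "0 \<le> w \<Longrightarrow> eta p w \<le> 1"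
  using eta_le_eta_ratio[of w 0 p] by (simp add: eta_ratio_def)

lemma eta_ratio_quotient:
  fixes a b :: real
  assumes "0 \<le> b" "b < a" "p * w \<noteq> 0"
  shows "eta_ratio p w (b / a)
    = (a powr w - b powr w) / (a - b) * (a powr (p * w) + b powr (p * w)) powr ((1 - w) / (p * w))"
proof -
  define k where "k = (1 - w) / (p * w)"
  define D where "D = (a powr (p * w) + b powr (p * w)) powr k"
  have a: "0 < a" using assms by simp
  have num: "1 - (b / a) powr w = (a powr w - b powr w) / a powr w"
    using a by (simp add: powr_divide field_simps)
  have den: "1 - b / a = (a - b) / a" using a by (simp add: field_simps)
  have fac: "(1 + (b / a) powr (p * w)) powr k = D / a powr (1 - w)"
  proof -
    have "1 + (b / a) powr (p * w) = (a powr (p * w) + b powr (p * w)) / a powr (p * w)"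
      using a by (simp add: powr_divide field_simps)
    moreover have "(a powr (p * w)) powr k = a powr (1 - w)"
      using assms by (simp add: k_def powr_powr)
    ultimately show ?thesis by (simp add: D_def powr_divide)
  qed
  have "eta_ratio p w (b / a) = (a powr w - b powr w) / a powr w / ((a - b) / a) * (D / a powr (1 - w))"
    unfolding eta_ratio_def k_def[symmetric] num den fac ..
  also have "\<dots> = (a powr w - b powr w) / (a - b) * D * (a / (a powr w * a powr (1 - w)))"
    using assms by (simp add: field_simps)
  also have "a powr w * a powr (1 - w) = a" using a by (simp flip: powr_add)
  finally show ?thesis using a by (simp add: D_def k_def)
qed

lemma f_omega_diff_lower_ordered:
  fixes x y :: "'a::real_normed_vector"
  assumes w: "0 \<le> w" "w \<le> 1" and "norm y \<le> norm x"
  shows "norm (x - y) * (norm x powr w - norm y powr w)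
    \<le> norm (f_omega w x - f_omega w y) * (norm x - norm y)"
proof -
  define a b t N where "a = norm x" "b = norm y" "t = norm (x - y)"
    "N = norm (f_omega w x - f_omega w y)"
  define K where "K = (a powr (1 - w) - b powr (1 - w)) * b powr w"
  have ab: "0 \<le> b" "b \<le> a" using assms by (simp_all add: a_b_t_N_def)
  have "b powr (1 - w) \<le> a powr (1 - w)" "b powr w \<le> a powr w"
    using ab w by (simp_all add: powr_mono2)
  hence K: "0 \<le> K" by (simp add: K_def)
  have N: "a powr w - b powr w \<le> N"
    using norm_triangle_ineq2[of "f_omega w x" "f_omega w y"] by (simp add: a_b_t_N_def norm_f_omega)
  have "x - y = a powr (1 - w) *\<^sub>R (f_omega w x - f_omega w y)
      + (a powr (1 - w) - b powr (1 - w)) *\<^sub>R f_omega w y"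
    using norm_powr_scaleR_f_omega[of x w] norm_powr_scaleR_f_omega[of y w]
    by (simp add: a_b_t_N_def algebra_simps)
  hence "t \<le> norm (a powr (1 - w) *\<^sub>R (f_omega w x - f_omega w y))
      + norm ((a powr (1 - w) - b powr (1 - w)) *\<^sub>R f_omega w y)"
    unfolding a_b_t_N_def by (simp only: norm_triangle_ineq)
  also have "\<dots> = a powr (1 - w) * N + K"
    using \<open>b powr (1 - w) \<le> a powr (1 - w)\<close> by (simp add: a_b_t_N_def K_def norm_f_omega)
  finally have "t \<le> a powr (1 - w) * N + K" .
  hence "t * (a powr w - b powr w) \<le> (a powr (1 - w) * N + K) * (a powr w - b powr w)"
    using \<open>b powr w \<le> a powr w\<close> by (intro mult_right_mono) auto
  also have "\<dots> \<le> a powr (1 - w) * N * (a powr w - b powr w) + K * N"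
    using K N by (simp add: distrib_right mult_left_mono)
  also have "\<dots> = N * (a - b)"
    using ab by (simp add: K_def algebra_simps flip: powr_add)
  finally show ?thesis by (simp add: a_b_t_N_def)
qed

lemma norm_diff_eq_of_norm_eq:
  fixes x y :: "'a::real_normed_vector"
  assumes "norm x = norm y"
  shows "norm (x - y) = norm x powr (1 - w) * norm (f_omega w x - f_omega w y)"
proof -
  have "x - y = norm x powr (1 - w) *\<^sub>R (f_omega w x - f_omega w y)"
    using norm_powr_scaleR_f_omega[of x w] norm_powr_scaleR_f_omega[of y w] assms
    by (simp add: algebra_simps)
  then show ?thesis by simp
qed

lemma f_omega_lower_ordered:
  fixes x y :: "'a::real_normed_vector"
  assumes w: "0 < w" "w < 1" and "0 < p" "norm y \<le> norm x"
  shows "eta p w * norm (x - y) / (norm x powr (p * w) + norm y powr (p * w)) powr ((1 - w) / (p * w))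
    \<le> norm (f_omega w x - f_omega w y)"
proof (cases "x = 0")
  case False
  define a b t N k where "a = norm x" "b = norm y" "t = norm (x - y)"
    "N = norm (f_omega w x - f_omega w y)" "k = (1 - w) / (p * w)"
  define D where "D = (a powr (p * w) + b powr (p * w)) powr k"
  have a: "0 < a" and ab: "0 \<le> b" "b \<le> a" using False assms by (simp_all add: a_b_t_N_k_def)
  have eta: "eta p w \<le> 1" using w by (simp add: eta_le_one)
  have "a powr (1 - w) = (a powr (p * w)) powr k"
    using assms by (simp add: a_b_t_N_k_def powr_powr)
  also have "\<dots> \<le> D"
    unfolding D_def using ab assms by (intro powr_mono2) (auto simp: a_b_t_N_k_def)
  finally have D: "a powr (1 - w) \<le> D" .
  hence D_pos: "0 < D" using a powr_gt_zero[of a "1 - w"] by linarith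
  have "eta p w * t / D \<le> N"
  proof (cases "b = a")
    case True
    hence t: "t = a powr (1 - w) * N"
      using norm_diff_eq_of_norm_eq[of x y w] by (simp add: a_b_t_N_k_def)
    have "eta p w * t / D \<le> t / D"
      using eta D_pos mult_right_mono[OF eta, of t] by (simp add: divide_right_mono a_b_t_N_k_def)
    also have "\<dots> \<le> t / a powr (1 - w)"
      using D a by (intro frac_le) (simp_all add: a_b_t_N_k_def)
    also have "\<dots> = N" using a by (simp add: t)
    finally show ?thesis .
  next
    case False
    hence "b < a" using ab by simp
    have "eta p w \<le> eta_ratio p w (b / a)"
      using \<open>b < a\<close> ab w by (intro eta_le_eta_ratio) auto
    hence "eta p w * t / D \<le> eta_ratio p w (b / a) * t / D"
      using D_pos by (intro divide_right_mono mult_right_mono) (auto simp: a_b_t_N_k_def)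
    also have "\<dots> = t * (a powr w - b powr w) / (a - b)"
      using eta_ratio_quotient[of b a p w] \<open>b < a\<close> ab assms D_pos by (simp add: D_def a_b_t_N_k_def)
    also have "\<dots> \<le> N"
      using f_omega_diff_lower_ordered[of w y x] w assms \<open>b < a\<close>
      by (simp add: a_b_t_N_k_def divide_le_eq)
    finally show ?thesis .
  qed
  then show ?thesis by (simp add: a_b_t_N_k_def D_def)
qed (use assms in simp)

lemma f_omega_lower:
  fixes x y :: "'a::real_normed_vector"
  assumes "0 < w" "w < 1" "0 < p"
  shows "eta p w * norm (x - y) / (norm x powr (p * w) + norm y powr (p * w)) powr ((1 - w) / (p * w))
    \<le> norm (f_omega w x - f_omega w y)"
  using f_omega_lower_ordered[OF assms, of y x] f_omega_lower_ordered[OF assms, of x y]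
  by (cases "norm y \<le> norm x") (simp_all add: norm_minus_commute add.commute)

lemma f_omega_eta_ratio_attained:
  assumes "0 \<le> w" "norm e = 1" "\<sigma> \<in> {0..<1}"
  shows "norm (f_omega w e - f_omega w (\<sigma> *\<^sub>R e))
    = eta_ratio p w \<sigma> * norm (e - \<sigma> *\<^sub>R e)
      / (norm e powr (p * w) + norm (\<sigma> *\<^sub>R e) powr (p * w)) powr ((1 - w) / (p * w))"
proof -
  have "f_omega w e - f_omega w (\<sigma> *\<^sub>R e) = (1 - \<sigma> powr w) *\<^sub>R e"
    using f_omega_scaleR_unit[of e 1 w] f_omega_scaleR_unit[of e \<sigma> w] assms
    by (simp add: algebra_simps)
  moreover have "e - \<sigma> *\<^sub>R e = (1 - \<sigma>) *\<^sub>R e" by (simp add: algebra_simps)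
  moreover have "\<sigma> powr w \<le> 1" using assms by (intro powr_le1) auto
  moreover have "0 < 1 + \<sigma> powr (p * w)" by (simp add: add_pos_nonneg)
  ultimately show ?thesis using assms by (simp add: eta_ratio_def)
qed

lemma f_omega_antipodal:
  assumes "norm e = 1"
  shows "norm (f_omega w e - f_omega w (- e)) = 2 powr (1 - w) * norm (e - - e) powr w"
proof -
  have "f_omega w e - f_omega w (- e) = 2 *\<^sub>R e" using assms by (simp add: f_omega_def scaleR_2)
  moreover have "e - - e = 2 *\<^sub>R e" by (simp add: scaleR_2)
  ultimately show ?thesis using assms by (simp flip: powr_add)
qed

lemma eta_optimal:
  fixes c :: real
  assumes "0 \<le> w" "eta p w < c" "\<exists>z :: 'a::real_normed_vector. z \<noteq> 0"
  shows "\<exists>x y :: 'a. norm (f_omega w x - f_omega w y)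
    < c * norm (x - y) / (norm x powr (p * w) + norm y powr (p * w)) powr ((1 - w) / (p * w))"
proof -
  obtain e :: 'a where e: "norm e = 1" using assms(3) by (metis norm_sgn)
  obtain \<sigma> where \<sigma>: "\<sigma> \<in> {0..<1}" and ratio: "eta_ratio p w \<sigma> < c"
    using cInf_lessD[of "eta_ratio p w ` {0..<1}" c] assms(2) by (auto simp: eta_eq_Inf_eta_ratio)
  have pos: "0 < norm (e - \<sigma> *\<^sub>R e)
      / (norm e powr (p * w) + norm (\<sigma> *\<^sub>R e) powr (p * w)) powr ((1 - w) / (p * w))"
  proof -
    have "e - \<sigma> *\<^sub>R e = (1 - \<sigma>) *\<^sub>R e" by (simp add: algebra_simps)
    moreover have "0 < 1 + \<sigma> powr (p * w)" by (simp add: add_pos_nonneg)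
    ultimately show ?thesis using e \<sigma> by simp
  qed
  have "norm (f_omega w e - f_omega w (\<sigma> *\<^sub>R e))
    < c * norm (e - \<sigma> *\<^sub>R e)
      / (norm e powr (p * w) + norm (\<sigma> *\<^sub>R e) powr (p * w)) powr ((1 - w) / (p * w))"
    unfolding f_omega_eta_ratio_attained[OF assms(1) e \<sigma>, where p = p] times_divide_eq_right[symmetric]
    using ratio pos by (rule mult_strict_right_mono)
  then show ?thesis by blast
qed

lemma two_powr_optimal:
  fixes c :: real
  assumes "c < 2 powr (1 - w)" "\<exists>z :: 'a::real_normed_vector. z \<noteq> 0"
  shows "\<exists>x y :: 'a. c * norm (x - y) powr w < norm (f_omega w x - f_omega w y)"
proof -
  obtain e :: 'a where e: "norm e = 1" using assms(2) by (metis norm_sgn)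
  have "norm (e - - e) = 2" using e by (simp add: scaleR_2[symmetric])
  hence "c * norm (e - - e) powr w < norm (f_omega w e - f_omega w (- e))"
    unfolding f_omega_antipodal[OF e] using assms(1) by (intro mult_strict_right_mono) auto
  then show ?thesis by blast
qed

theorem lemma5p12:
  fixes \<omega> p :: real
  assumes "0 < \<omega>" "\<omega> < 1" "0 < p"
  shows "(\<forall>x y :: 'a::banach.
            eta p \<omega> * norm (x - y)
              / (norm x powr (p * \<omega>) + norm y powr (p * \<omega>)) powr ((1 - \<omega>) / (p * \<omega>))
              \<le> norm (f_omega \<omega> x - f_omega \<omega> y)
          \<and> norm (f_omega \<omega> x - f_omega \<omega> y) \<le> 2 powr (1 - \<omega>) * norm (x - y) powr \<omega>)
       \<and> ((\<exists>z :: 'a. z \<noteq> 0) \<longrightarrow>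
            (\<forall>c > eta p \<omega>. \<exists>x y :: 'a.
               norm (f_omega \<omega> x - f_omega \<omega> y) < c * norm (x - y)
                 / (norm x powr (p * \<omega>) + norm y powr (p * \<omega>)) powr ((1 - \<omega>) / (p * \<omega>)))
          \<and> (\<forall>c < 2 powr (1 - \<omega>). \<exists>x y :: 'a.
               c * norm (x - y) powr \<omega> < norm (f_omega \<omega> x - f_omega \<omega> y)))"
  using assms by (auto intro!: f_omega_lower f_omega_holder eta_optimal two_powr_optimal)

end
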